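(* Let $p$ be a prime and let $(\mathcal G,\mathbf x)$ and $(\mathcal H,\mathbf y)$ be similar finite $p$-rigid multi-sorted relational structures, each with $r$ distinguished vertices. Then $(\mathcal G,\mathbf x)\cong(\mathcal H,\mathbf y)$ if and only if $$\mathrm{hom}((\mathcal K,\mathbf z),(\mathcal G,\mathbf x))\equiv\mathrm{hom}((\mathcal K,\mathbf z),(\mathcal H,\mathbf y))\pmod p$$ for every similar finite multi-sorted structure $(\mathcal K,\mathbf z)$ with $r$ distinguished vertices.
   Context: A multi-sorted structure with $r$ distinguished vertices $(\mathcal G,\mathbf x)$ is a multi-sorted structure $\mathcal G$ (pairwise disjoint sorts $G_1,\dots,G_k$, relations of fixed types) together with an $r$-tuple $\mathbf x=(x_1,\dots,x_r)$ of elements (possibly of different sorts, with a fixed sort pattern common to similar structures). Homomorphisms $(\mathcal K,\mathbf z)\to(\mathcal G,\mathbf x)$ are homomorphisms $\varphi=\{\varphi_i\}$ of multi-sorted structures (sort-preserving maps preserving all relations) with $\varphi(z_j)=x_j$ for all $j$; $\mathrm{hom}$ counts them; isomorphisms and automorphisms are defined accordingly. $(\mathcal G,\mathbf x)$ is $p$-rigid if it has no automorphism $\pi=\{\pi_i\}$ of order $p$ (each $\pi_i$ identity or of order $p$, not all identity) fixing all distinguished vertices. *)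

theory Defs
  imports Main "HOL-Library.FuncSet" "HOL-Computational_Algebra.Primes"
begin

text \<open>Signature: k sorts (indexed 0..k-1), relation symbols of type 'r, each with
  a fixed sort pattern ty R (a list of sort indices), and a sort pattern s
  for the r = length s distinguished vertices.\<close>

definition sig_wf :: "nat \<Rightarrow> ('r \<Rightarrow> nat list) \<Rightarrow> nat list \<Rightarrow> bool" where
  "sig_wf k ty s \<longleftrightarrow> (\<forall>R. \<forall>j\<in>set (ty R). j < k) \<and> (\<forall>j\<in>set s. j < k)"

record ('a, 'r) mstruct =
  sorts :: "nat \<Rightarrow> 'a set"
  rels  :: "'r \<Rightarrow> 'a list set"
  dist  :: "'a list"

definition univ :: "nat \<Rightarrow> ('a, 'r) mstruct \<Rightarrow> 'a set" where
  "univ k G = (\<Union>i<k. sorts G i)"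

definition ms_wf :: "nat \<Rightarrow> ('r \<Rightarrow> nat list) \<Rightarrow> nat list \<Rightarrow> ('a, 'r) mstruct \<Rightarrow> bool" where
  "ms_wf k ty s G \<longleftrightarrow>
     (\<forall>i<k. \<forall>j<k. i \<noteq> j \<longrightarrow> sorts G i \<inter> sorts G j = {}) \<and>
     (\<forall>R. \<forall>t\<in>rels G R. length t = length (ty R) \<and>
                         (\<forall>j<length t. t ! j \<in> sorts G (ty R ! j))) \<and>
     length (dist G) = length s \<and> (\<forall>j<length s. dist G ! j \<in> sorts G (s ! j))"

definition ms_finite :: "nat \<Rightarrow> ('a, 'r) mstruct \<Rightarrow> bool" where
  "ms_finite k G \<longleftrightarrow> (\<forall>i<k. finite (sorts G i))"

text \<open>Homomorphisms: a family of sort-preserving maps, represented as a single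
  map on the (disjoint) union of the sorts, preserving all relations and
  mapping distinguished vertices to distinguished vertices.\<close>

definition is_hom :: "nat \<Rightarrow> ('a, 'r) mstruct \<Rightarrow> ('b, 'r) mstruct \<Rightarrow> ('a \<Rightarrow> 'b) \<Rightarrow> bool" where
  "is_hom k K G f \<longleftrightarrow>
     (\<forall>i<k. \<forall>v\<in>sorts K i. f v \<in> sorts G i) \<and>
     (\<forall>R. \<forall>t\<in>rels K R. map f t \<in> rels G R) \<and>
     map f (dist K) = dist G"

definition hom_count :: "nat \<Rightarrow> ('a, 'r) mstruct \<Rightarrow> ('b, 'r) mstruct \<Rightarrow> nat" where
  "hom_count k K G = card {f. f \<in> extensional (univ k K) \<and> is_hom k K G f}"

definition is_iso :: "nat \<Rightarrow> ('a, 'r) mstruct \<Rightarrow> ('b, 'r) mstruct \<Rightarrow> ('a \<Rightarrow> 'b) \<Rightarrow> bool" where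
  "is_iso k G H f \<longleftrightarrow>
     (\<forall>i<k. bij_betw f (sorts G i) (sorts H i)) \<and>
     (\<forall>R. \<forall>t. set t \<subseteq> univ k G \<longrightarrow> (t \<in> rels G R \<longleftrightarrow> map f t \<in> rels H R)) \<and>
     map f (dist G) = dist H"

definition ms_iso :: "nat \<Rightarrow> ('a, 'r) mstruct \<Rightarrow> ('b, 'r) mstruct \<Rightarrow> bool" where
  "ms_iso k G H \<longleftrightarrow> (\<exists>f. is_iso k G H f)"

text \<open>p-rigid: no automorphism fixing the distinguished vertices whose components
  are each the identity or of order p, not all the identity. For prime p,
  a component has order 1 or p iff its p-th power is the identity.\<close>

definition p_rigid :: "nat \<Rightarrow> nat \<Rightarrow> ('a, 'r) mstruct \<Rightarrow> bool" where
  "p_rigid p k G \<longleftrightarrow> \<not> (\<exists>\<pi>. is_iso k G G \<pi> \<and>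
       (\<forall>i<k. \<forall>v\<in>sorts G i. (\<pi> ^^ p) v = v) \<and>
       (\<exists>i<k. \<exists>v\<in>sorts G i. \<pi> v \<noteq> v))"

end

theory Submission
  imports Defs "HOL-Algebra.Sylow" "HOL-Algebra.Bij" "HOL-Algebra.Multiplicative_Group"
    "HOL-Number_Theory.Cong"
begin

text \<open>Every homomorphism K \<rightarrow> X factors uniquely as the canonical map onto a quotient of K
  (obtained by identifying the vertices with equal image) followed by an injective homomorphism.
  Hence hom(K, X) is the sum of inj(K', X) over the quotients K' of K, and K itself is the only
  quotient of its size; by induction on the size of K, congruence of all hom counts mod p implies
  congruence of all counts of injective homomorphisms mod p.  For a p-rigid G the number of
  injective homomorphisms G \<rightarrow> G is the order of Aut(G), which is prime to p by Cauchy's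
  theorem.  So there are injective homomorphisms G \<rightarrow> H and H \<rightarrow> G, and for finite
  structures these are isomorphisms.\<close>

section \<open>Homomorphisms and isomorphisms\<close>

lemma rels_subset_univ:
  assumes "sig_wf k ty s" "ms_wf k ty s K" "t \<in> rels K R"
  shows "set t \<subseteq> univ k K"
proof
  fix x assume "x \<in> set t"
  then obtain j where j: "j < length t" "t ! j = x" by (auto simp: in_set_conv_nth)
  have "length t = length (ty R)" "t ! j \<in> sorts K (ty R ! j)"
    using assms(2,3) j unfolding ms_wf_def by auto
  moreover have "ty R ! j < k" using assms(1) j \<open>length t = length (ty R)\<close>
    unfolding sig_wf_def by (metis nth_mem)
  ultimately show "x \<in> univ k K" using j unfolding univ_def by auto
qed

lemma dist_subset_univ:
  assumes "sig_wf k ty s" "ms_wf k ty s K"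
  shows "set (mstruct.dist K) \<subseteq> univ k K"
proof
  fix x assume "x \<in> set (mstruct.dist K)"
  then obtain j where j: "j < length (mstruct.dist K)" "mstruct.dist K ! j = x"
    by (auto simp: in_set_conv_nth)
  have "length (mstruct.dist K) = length s" "mstruct.dist K ! j \<in> sorts K (s ! j)"
    using assms(2) j unfolding ms_wf_def by auto
  moreover have "s ! j < k" using assms(1) j \<open>length (mstruct.dist K) = length s\<close>
    unfolding sig_wf_def by (metis nth_mem)
  ultimately show "x \<in> univ k K" using j unfolding univ_def by auto
qed

lemma finite_univ: "ms_finite k K \<Longrightarrow> finite (univ k K)"
  unfolding ms_finite_def univ_def by auto

lemma finite_rels:
  assumes "sig_wf k ty s" "ms_wf k ty s G" "ms_finite k G"
  shows "finite (rels G R)"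
proof (rule finite_subset)
  show "rels G R \<subseteq> {xs. set xs \<subseteq> univ k G \<and> length xs \<le> length (ty R)}"
    using assms(2) rels_subset_univ[OF assms(1,2)] unfolding ms_wf_def by auto
  show "finite {xs. set xs \<subseteq> univ k G \<and> length xs \<le> length (ty R)}"
    using finite_lists_length_le finite_univ[OF assms(3)] by blast
qed

lemma is_hom_univ: "is_hom k K G f \<Longrightarrow> v \<in> univ k K \<Longrightarrow> f v \<in> univ k G"
  unfolding is_hom_def univ_def by auto

lemma map_restrict_eq: "set t \<subseteq> A \<Longrightarrow> map (restrict f A) t = map f t"
  by (induct t) auto

lemma is_hom_restrict_id:
  assumes "sig_wf k ty s" "ms_wf k ty s G"
  shows "is_hom k G G (restrict id (univ k G))"
  unfolding is_hom_def
proof (intro conjI allI impI ballI)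
  fix i v assume "i < k" "v \<in> sorts G i"
  then show "restrict id (univ k G) v \<in> sorts G i" unfolding univ_def by auto
next
  fix R t assume "t \<in> rels G R"
  then show "map (restrict id (univ k G)) t \<in> rels G R"
    using rels_subset_univ[OF assms] by (simp add: map_restrict_eq)
next
  show "map (restrict id (univ k G)) (mstruct.dist G) = mstruct.dist G"
    using dist_subset_univ[OF assms] by (simp add: map_restrict_eq)
qed

lemma is_hom_restrict_comp:
  assumes "sig_wf k ty s" "ms_wf k ty s K" "is_hom k K G f" "is_hom k G H g"
  shows "is_hom k K H (restrict (g \<circ> f) (univ k K))"
  unfolding is_hom_def
proof (intro conjI allI ballI impI)
  fix i v assume "i < k" "v \<in> sorts K i"
  then show "restrict (g \<circ> f) (univ k K) v \<in> sorts H i"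
    using assms(3,4) unfolding is_hom_def univ_def by auto
next
  fix R t assume "t \<in> rels K R"
  then show "map (restrict (g \<circ> f) (univ k K)) t \<in> rels H R"
    using assms(3,4) rels_subset_univ[OF assms(1,2)] unfolding is_hom_def
    by (simp add: map_restrict_eq flip: map_map)
next
  show "map (restrict (g \<circ> f) (univ k K)) (mstruct.dist K) = mstruct.dist H"
    using assms(3,4) dist_subset_univ[OF assms(1,2)] unfolding is_hom_def
    by (simp add: map_restrict_eq flip: map_map)
qed

lemma is_iso_imp_is_hom:
  assumes "sig_wf k ty s" "ms_wf k ty s G" "Defs.is_iso k G H f"
  shows "is_hom k G H f"
  using assms(3) rels_subset_univ[OF assms(1,2)]
  unfolding is_hom_def Defs.is_iso_def bij_betw_def by blast

lemma is_iso_image_univ: "Defs.is_iso k G H f \<Longrightarrow> f ` univ k G = univ k H"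
  unfolding Defs.is_iso_def univ_def bij_betw_def by (auto simp: image_UN)

text \<open>Injectivity across different sorts uses that the sorts of H are disjoint.\<close>

lemma is_iso_inj_on_univ:
  assumes "ms_wf k ty s H" "Defs.is_iso k G H f"
  shows "inj_on f (univ k G)"
proof (rule inj_onI)
  fix u v assume "u \<in> univ k G" "v \<in> univ k G" and eq: "f u = f v"
  then obtain i j where i: "i < k" "u \<in> sorts G i" and j: "j < k" "v \<in> sorts G j"
    unfolding univ_def by auto
  have "f u \<in> sorts H i" "f v \<in> sorts H j"
    using assms(2) i j unfolding Defs.is_iso_def bij_betw_def by auto
  then have "i = j" using assms(1) i j eq unfolding ms_wf_def by auto
  then show "u = v"
    using assms(2) i j eq unfolding Defs.is_iso_def bij_betw_def inj_on_def by auto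
qed

lemma is_iso_inv:
  assumes "sig_wf k ty s" "ms_wf k ty s G" "ms_wf k ty s H" "Defs.is_iso k G H f"
  shows "Defs.is_iso k H G (\<lambda>w\<in>univ k H. inv_into (univ k G) f w)"
proof -
  define \<psi> where "\<psi> = (\<lambda>w\<in>univ k H. inv_into (univ k G) f w)"
  have inj: "inj_on f (univ k G)" by (rule is_iso_inj_on_univ[OF assms(3,4)])
  have img: "f ` univ k G = univ k H" by (rule is_iso_image_univ[OF assms(4)])
  have \<psi>_f: "\<psi> (f v) = v" if "v \<in> univ k G" for v
    using that img inv_into_f_f[OF inj] unfolding \<psi>_def by auto
  have f_\<psi>: "f (\<psi> w) = w" and \<psi>_univ: "\<psi> w \<in> univ k G" if "w \<in> univ k H" for w
    using that img unfolding \<psi>_def by (auto simp: f_inv_into_f inv_into_into)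
  show ?thesis
    unfolding Defs.is_iso_def \<psi>_def[symmetric]
  proof (intro conjI allI impI)
    fix i assume i: "i < k"
    have b: "bij_betw f (sorts G i) (sorts H i)" using assms(4) i unfolding Defs.is_iso_def by auto
    have "\<psi> w = inv_into (sorts G i) f w" if "w \<in> sorts H i" for w
    proof -
      obtain v where v: "v \<in> sorts G i" "w = f v" using b \<open>w \<in> sorts H i\<close> unfolding bij_betw_def by auto
      then have "v \<in> univ k G" using i unfolding univ_def by auto
      then show ?thesis using v b \<psi>_f unfolding bij_betw_def by auto
    qed
    then show "bij_betw \<psi> (sorts H i) (sorts G i)"
      using bij_betw_inv_into[OF b] bij_betw_cong by blast
  next
    fix R t assume t: "set t \<subseteq> univ k H"
    have "map f (map \<psi> t) = t" using t f_\<psi> by (induct t) auto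
    moreover have "set (map \<psi> t) \<subseteq> univ k G" using t \<psi>_univ by auto
    ultimately show "(t \<in> rels H R) = (map \<psi> t \<in> rels G R)"
      using assms(4) unfolding Defs.is_iso_def by metis
  next
    have "map \<psi> (map f (mstruct.dist G)) = mstruct.dist G"
      using dist_subset_univ[OF assms(1,2)] \<psi>_f by (auto intro!: map_idI)
    then show "map \<psi> (mstruct.dist H) = mstruct.dist G"
      using assms(4) unfolding Defs.is_iso_def by simp
  qed
qed

lemma image_eq_if_inj_on_both_ways:
  assumes "finite A" "finite B" "inj_on f A" "f ` A \<subseteq> B" "inj_on g B" "g ` B \<subseteq> A"
  shows "f ` A = B"
proof -
  have "card A \<le> card B" "card B \<le> card A"
    using card_inj_on_le assms by (metis image_subset_iff_funcset)+
  then have "card (f ` A) = card B" using assms(3) by (simp add: card_image)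
  then show ?thesis using assms(2,4) card_subset_eq by blast
qed

lemma is_iso_if_inj_homs_both_ways:
  assumes "sig_wf k ty s" "ms_wf k ty s G" "ms_wf k ty s H" "ms_finite k G" "ms_finite k H"
    and f: "is_hom k G H f" "inj_on f (univ k G)"
    and g: "is_hom k H G g" "inj_on g (univ k H)"
  shows "Defs.is_iso k G H f"
  unfolding Defs.is_iso_def
proof (intro conjI allI impI)
  fix i assume i: "i < k"
  have sub: "sorts G i \<subseteq> univ k G" "sorts H i \<subseteq> univ k H" using i unfolding univ_def by auto
  have "f ` sorts G i = sorts H i"
  proof (rule image_eq_if_inj_on_both_ways)
    show "finite (sorts G i)" "finite (sorts H i)" using assms(4,5) i unfolding ms_finite_def by auto
    show "inj_on f (sorts G i)" "inj_on g (sorts H i)"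
      using inj_on_subset f(2) g(2) sub by blast+
    show "f ` sorts G i \<subseteq> sorts H i" "g ` sorts H i \<subseteq> sorts G i"
      using f(1) g(1) i unfolding is_hom_def by blast+
  qed
  then show "bij_betw f (sorts G i) (sorts H i)"
    using inj_on_subset[OF f(2) sub(1)] unfolding bij_betw_def by blast
next
  fix R t assume t: "set t \<subseteq> univ k G"
  have lf: "inj_on (map f) (lists (univ k G))" by (rule inj_on_map_lists[OF f(2)])
  have AG: "rels G R \<subseteq> lists (univ k G)" and AH: "rels H R \<subseteq> lists (univ k H)"
    using rels_subset_univ[OF assms(1,2)] rels_subset_univ[OF assms(1,3)] by blast+
  have eq: "map f ` rels G R = rels H R"
  proof (rule image_eq_if_inj_on_both_ways)
    show "finite (rels G R)" by (rule finite_rels[OF assms(1,2,4)])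
    show "finite (rels H R)" by (rule finite_rels[OF assms(1,3,5)])
    show "inj_on (map f) (rels G R)" using inj_on_subset[OF lf AG] .
    show "inj_on (map g) (rels H R)" using inj_on_subset[OF inj_on_map_lists[OF g(2)] AH] .
    show "map f ` rels G R \<subseteq> rels H R" "map g ` rels H R \<subseteq> rels G R"
      using f(1) g(1) unfolding is_hom_def by blast+
  qed
  show "(t \<in> rels G R) = (map f t \<in> rels H R)"
  proof
    assume "map f t \<in> rels H R"
    then obtain t' where t': "t' \<in> rels G R" "map f t' = map f t" using eq by (metis imageE)
    moreover have "t \<in> lists (univ k G)" "t' \<in> lists (univ k G)" using t AG t'(1) by auto
    ultimately have "t' = t" using inj_onD[OF lf] by blast
    then show "t \<in> rels G R" using t' by simp
  qed (use eq in blast)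
next
  show "map f (mstruct.dist G) = mstruct.dist H" using f(1) unfolding is_hom_def by simp
qed

section \<open>Counting homomorphisms\<close>

definition hom_set :: "nat \<Rightarrow> ('a, 'r) mstruct \<Rightarrow> ('b, 'r) mstruct \<Rightarrow> ('a \<Rightarrow> 'b) set" where
  "hom_set k K G = {f. f \<in> extensional (univ k K) \<and> is_hom k K G f}"

definition inj_set :: "nat \<Rightarrow> ('a, 'r) mstruct \<Rightarrow> ('b, 'r) mstruct \<Rightarrow> ('a \<Rightarrow> 'b) set" where
  "inj_set k K G = {f \<in> hom_set k K G. inj_on f (univ k K)}"

lemma hom_count_eq_card_hom_set: "hom_count k K G = card (hom_set k K G)"
  unfolding hom_count_def hom_set_def ..

lemma finite_hom_set:
  assumes "ms_finite k K" "ms_finite k G"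
  shows "finite (hom_set k K G)"
proof (rule finite_subset)
  show "hom_set k K G \<subseteq> PiE (univ k K) (\<lambda>_. univ k G)"
    unfolding hom_set_def using is_hom_univ by (auto simp: PiE_def Pi_def)
  show "finite (PiE (univ k K) (\<lambda>_. univ k G))" using finite_PiE finite_univ assms by metis
qed

lemma finite_inj_set: "ms_finite k K \<Longrightarrow> ms_finite k G \<Longrightarrow> finite (inj_set k K G)"
  unfolding inj_set_def by (rule finite_subset[OF _ finite_hom_set]) auto

lemma card_hom_set_le_if_is_iso:
  fixes K :: "('c, 'r) mstruct" and G :: "('a, 'r) mstruct" and H :: "('b, 'r) mstruct"
  assumes "sig_wf k ty s" "ms_wf k ty s K" "ms_finite k K" "ms_wf k ty s G" "ms_wf k ty s H"
    "ms_finite k H" "Defs.is_iso k G H \<phi>"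
  shows "card (hom_set k K G) \<le> card (hom_set k K H)"
proof (rule card_inj_on_le)
  let ?\<Phi> = "\<lambda>f. restrict (\<phi> \<circ> f) (univ k K)"
  show "?\<Phi> ` hom_set k K G \<subseteq> hom_set k K H"
    unfolding hom_set_def
    using is_hom_restrict_comp[OF assms(1,2) _ is_iso_imp_is_hom[OF assms(1,4,7)]] by auto
  have inj: "inj_on \<phi> (univ k G)" by (rule is_iso_inj_on_univ[OF assms(5,7)])
  show "inj_on ?\<Phi> (hom_set k K G)"
  proof (rule inj_onI)
    fix f f' assume f: "f \<in> hom_set k K G" and f': "f' \<in> hom_set k K G" and eq: "?\<Phi> f = ?\<Phi> f'"
    show "f = f'"
    proof (rule extensionalityI)
      show "f \<in> extensional (univ k K)" "f' \<in> extensional (univ k K)"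
        using f f' unfolding hom_set_def by auto
      fix v assume v: "v \<in> univ k K"
      then have "\<phi> (f v) = \<phi> (f' v)" using fun_cong[OF eq, of v] by simp
      moreover have "f v \<in> univ k G" "f' v \<in> univ k G"
        using f f' v is_hom_univ unfolding hom_set_def by auto
      ultimately show "f v = f' v" using inj by (meson inj_onD)
    qed
  qed
  show "finite (hom_set k K H)" by (rule finite_hom_set[OF assms(3,6)])
qed

lemma hom_count_eq_if_is_iso:
  assumes "sig_wf k ty s" "ms_wf k ty s K" "ms_finite k K" "ms_wf k ty s G" "ms_wf k ty s H"
    "ms_finite k G" "ms_finite k H" "Defs.is_iso k G H \<phi>"
  shows "hom_count k K G = hom_count k K H"
  unfolding hom_count_eq_card_hom_set
  using card_hom_set_le_if_is_iso[OF assms(1-5,7,8)]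
    card_hom_set_le_if_is_iso[OF assms(1-3,5,4,6) is_iso_inv[OF assms(1,4,5,8)]]
  by simp

lemma card_inj_set_le_if_is_iso:
  fixes A :: "('a, 'r) mstruct" and B :: "('b, 'r) mstruct" and X :: "('c, 'r) mstruct"
  assumes "sig_wf k ty s" "ms_wf k ty s A" "ms_wf k ty s B" "ms_finite k A" "ms_finite k X"
    "Defs.is_iso k A B \<phi>"
  shows "card (inj_set k B X) \<le> card (inj_set k A X)"
proof (rule card_inj_on_le)
  let ?\<Phi> = "\<lambda>g. restrict (g \<circ> \<phi>) (univ k A)"
  have img: "\<phi> ` univ k A = univ k B" by (rule is_iso_image_univ[OF assms(6)])
  show "?\<Phi> ` inj_set k B X \<subseteq> inj_set k A X"
  proof (rule image_subsetI)
    fix g assume g: "g \<in> inj_set k B X"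
    have "is_hom k A X (?\<Phi> g)"
      using is_hom_restrict_comp[OF assms(1,2) is_iso_imp_is_hom[OF assms(1,2,6)]] g
      unfolding inj_set_def hom_set_def by auto
    moreover have "inj_on (g \<circ> \<phi>) (univ k A)"
      using comp_inj_on[OF is_iso_inj_on_univ[OF assms(3,6)]] img g unfolding inj_set_def by auto
    ultimately show "?\<Phi> g \<in> inj_set k A X"
      unfolding inj_set_def hom_set_def by (auto simp: inj_on_def)
  qed
  show "inj_on ?\<Phi> (inj_set k B X)"
  proof (rule inj_onI)
    fix g g' assume g: "g \<in> inj_set k B X" and g': "g' \<in> inj_set k B X" and eq: "?\<Phi> g = ?\<Phi> g'"
    show "g = g'"
    proof (rule extensionalityI)
      show "g \<in> extensional (univ k B)" "g' \<in> extensional (univ k B)"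
        using g g' unfolding inj_set_def hom_set_def by auto
      fix w assume "w \<in> univ k B"
      then obtain v where "v \<in> univ k A" "w = \<phi> v" using img by blast
      then show "g w = g' w" using fun_cong[OF eq, of v] by simp
    qed
  qed
  show "finite (inj_set k A X)" by (rule finite_inj_set[OF assms(4,5)])
qed

lemma card_inj_set_eq_if_is_iso:
  assumes "sig_wf k ty s" "ms_wf k ty s A" "ms_wf k ty s B" "ms_finite k A" "ms_finite k B"
    "ms_finite k X" "Defs.is_iso k A B \<phi>"
  shows "card (inj_set k A X) = card (inj_set k B X)"
  using card_inj_set_le_if_is_iso[OF assms(1-4,6,7)]
    card_inj_set_le_if_is_iso[OF assms(1,3,2,5,6) is_iso_inv[OF assms(1,2,3,7)]]
  by simp

text \<open>The test structures K range over the vertex type nat only, so every finite structure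
  must be transported to an isomorphic copy on an initial segment of nat.\<close>

lemma ex_is_iso_nat_copy:
  fixes A :: "('a, 'r) mstruct"
  assumes "sig_wf k ty s" "ms_wf k ty s A" "ms_finite k A"
  shows "\<exists>(A' :: (nat, 'r) mstruct) \<phi>. ms_wf k ty s A' \<and> ms_finite k A' \<and> Defs.is_iso k A' A \<phi>"
proof -
  define n where "n = card (univ k A)"
  obtain h where h: "bij_betw h {0..<n} (univ k A)"
    using ex_bij_betw_nat_finite[OF finite_univ[OF assms(3)]] unfolding n_def by blast
  define h' where "h' = inv_into {0..<n} h"
  have hinj: "inj_on h {0..<n}" and himg: "h ` {0..<n} = univ k A"
    using h unfolding bij_betw_def by auto
  have hh': "h (h' x) = x" and h'_in: "h' x \<in> {0..<n}" if "x \<in> univ k A" for x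
    using that himg inv_into_into[of x h "{0..<n}"] unfolding h'_def by (auto simp: f_inv_into_f)
  define A' :: "(nat, 'r) mstruct" where
    "A' = \<lparr>sorts = (\<lambda>i. {x \<in> {0..<n}. h x \<in> sorts A i}),
      rels = (\<lambda>R. {t. set t \<subseteq> {0..<n} \<and> map h t \<in> rels A R}),
      dist = map h' (mstruct.dist A)\<rparr>"
  have dA: "set (mstruct.dist A) \<subseteq> univ k A" by (rule dist_subset_univ[OF assms(1,2)])
  have "ms_wf k ty s A'"
    unfolding ms_wf_def
  proof (intro conjI allI impI ballI)
    fix i j assume "i < k" "j < k" "i \<noteq> j"
    then show "sorts A' i \<inter> sorts A' j = {}" using assms(2) unfolding A'_def ms_wf_def by auto
  next
    fix R t assume "t \<in> rels A' R"
    then have t: "set t \<subseteq> {0..<n}" "map h t \<in> rels A R" unfolding A'_def by auto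
    then show "length t = length (ty R)" using assms(2) unfolding ms_wf_def by (metis length_map)
    fix j assume j: "j < length t"
    have "map h t ! j \<in> sorts A (ty R ! j)" using t(2) j assms(2) unfolding ms_wf_def by force
    then show "t ! j \<in> sorts A' (ty R ! j)" using t(1) j nth_mem unfolding A'_def by fastforce
  next
    show "length (mstruct.dist A') = length s" using assms(2) unfolding A'_def ms_wf_def by simp
  next
    fix j assume j: "j < length s"
    then have j': "j < length (mstruct.dist A)" using assms(2) unfolding ms_wf_def by simp
    then have "mstruct.dist A ! j \<in> univ k A" using dA nth_mem by blast
    then show "mstruct.dist A' ! j \<in> sorts A' (s ! j)"
      using j j' assms(2) hh' h'_in unfolding A'_def ms_wf_def by simp
  qed
  moreover have "ms_finite k A'" unfolding ms_finite_def A'_def by auto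
  moreover have "Defs.is_iso k A' A h"
    unfolding Defs.is_iso_def
  proof (intro conjI allI impI)
    fix i assume i: "i < k"
    have sub: "sorts A' i \<subseteq> {0..<n}" unfolding A'_def by auto
    have "sorts A i \<subseteq> univ k A" using i unfolding univ_def by auto
    then have "h ` sorts A' i = sorts A i"
      using himg unfolding A'_def by (auto simp: image_iff) (metis atLeastLessThan_iff imageE subsetD)
    then show "bij_betw h (sorts A' i) (sorts A i)"
      using inj_on_subset[OF hinj sub] unfolding bij_betw_def by blast
  next
    fix R t assume "set t \<subseteq> univ k A'"
    moreover have "univ k A' \<subseteq> {0..<n}" unfolding univ_def A'_def by auto
    ultimately show "(t \<in> rels A' R) = (map h t \<in> rels A R)" unfolding A'_def by auto
  next
    show "map h (mstruct.dist A') = mstruct.dist A"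
      unfolding A'_def using dA hh' by (auto intro!: map_idI)
  qed
  ultimately show ?thesis by blast
qed

section \<open>Quotients and the decomposition of homomorphisms\<close>

text \<open>A quotient of K is encoded by a retraction e of its vertex set onto a set of
  representatives; choosing the least vertex of each class makes e unique for the partition,
  so distinct retractions give distinct quotient maps.\<close>

definition canonical_retractions :: "nat \<Rightarrow> (nat, 'r) mstruct \<Rightarrow> (nat \<Rightarrow> nat) set" where
  "canonical_retractions k K =
     {e. e \<in> extensional (univ k K) \<and> (\<forall>i<k. \<forall>v\<in>sorts K i. e v \<in> sorts K i) \<and>
       (\<forall>v\<in>univ k K. e v = (LEAST u. u \<in> univ k K \<and> e u = e v))}"

definition ms_quotient :: "(nat, 'r) mstruct \<Rightarrow> (nat \<Rightarrow> nat) \<Rightarrow> (nat, 'r) mstruct" where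
  "ms_quotient K e = \<lparr>sorts = (\<lambda>i. e ` sorts K i), rels = (\<lambda>R. map e ` rels K R),
     dist = map e (mstruct.dist K)\<rparr>"

definition kernel_retraction :: "nat \<Rightarrow> (nat, 'r) mstruct \<Rightarrow> (nat \<Rightarrow> 'b) \<Rightarrow> nat \<Rightarrow> nat" where
  "kernel_retraction k K f = (\<lambda>v\<in>univ k K. LEAST u. u \<in> univ k K \<and> f u = f v)"

lemma ms_quotient_simps [simp]:
  "sorts (ms_quotient K e) i = e ` sorts K i"
  "rels (ms_quotient K e) R = map e ` rels K R"
  "mstruct.dist (ms_quotient K e) = map e (mstruct.dist K)"
  unfolding ms_quotient_def by simp_all

lemma univ_ms_quotient: "univ k (ms_quotient K e) = e ` univ k K"
  unfolding univ_def by (simp add: image_UN)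

lemma ms_finite_ms_quotient: "ms_finite k K \<Longrightarrow> ms_finite k (ms_quotient K e)"
  unfolding ms_finite_def by simp

lemma is_hom_ms_quotient_map: "is_hom k K (ms_quotient K e) e"
  unfolding is_hom_def by auto

lemma canonical_retraction_sorts:
  "e \<in> canonical_retractions k K \<Longrightarrow> i < k \<Longrightarrow> v \<in> sorts K i \<Longrightarrow> e v \<in> sorts K i"
  unfolding canonical_retractions_def by blast

lemma canonical_retraction_extensional:
  "e \<in> canonical_retractions k K \<Longrightarrow> e \<in> extensional (univ k K)"
  unfolding canonical_retractions_def by blast

lemma canonical_retraction_Least:
  "e \<in> canonical_retractions k K \<Longrightarrow> v \<in> univ k K \<Longrightarrow>
    e v = (LEAST u. u \<in> univ k K \<and> e u = e v)"
  unfolding canonical_retractions_def by blast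

lemma canonical_retraction_idem:
  assumes "e \<in> canonical_retractions k K" "v \<in> univ k K"
  shows "e v \<in> univ k K" "e (e v) = e v"
proof -
  have "(LEAST u. u \<in> univ k K \<and> e u = e v) \<in> univ k K \<and>
      e (LEAST u. u \<in> univ k K \<and> e u = e v) = e v"
    by (rule LeastI[of _ v]) (use assms(2) in simp)
  then show "e v \<in> univ k K" "e (e v) = e v"
    unfolding canonical_retraction_Least[OF assms, symmetric] by simp_all
qed

lemma finite_canonical_retractions:
  assumes "ms_finite k K"
  shows "finite (canonical_retractions k K)"
proof (rule finite_subset)
  show "canonical_retractions k K \<subseteq> PiE (univ k K) (\<lambda>_. univ k K)"
  proof
    fix e assume e: "e \<in> canonical_retractions k K"
    then show "e \<in> PiE (univ k K) (\<lambda>_. univ k K)"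
      using canonical_retraction_extensional[OF e] canonical_retraction_idem(1)[OF e]
      by (simp add: PiE_iff)
  qed
  show "finite (PiE (univ k K) (\<lambda>_. univ k K))"
    using finite_univ[OF assms] by (simp add: finite_PiE)
qed

lemma ms_wf_ms_quotient:
  assumes "ms_wf k ty s K" "e \<in> canonical_retractions k K"
  shows "ms_wf k ty s (ms_quotient K e)"
  unfolding ms_wf_def
proof (intro conjI allI impI ballI)
  fix i j assume ij: "i < k" "j < k" "i \<noteq> j"
  then have "e ` sorts K i \<subseteq> sorts K i" "e ` sorts K j \<subseteq> sorts K j"
    using canonical_retraction_sorts[OF assms(2)] by auto
  moreover have "sorts K i \<inter> sorts K j = {}" using assms(1) ij unfolding ms_wf_def by blast
  ultimately show "sorts (ms_quotient K e) i \<inter> sorts (ms_quotient K e) j = {}" by auto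
next
  fix R t' assume "t' \<in> rels (ms_quotient K e) R"
  then obtain t where t: "t \<in> rels K R" "t' = map e t" by auto
  then have "length t = length (ty R)" "\<forall>j<length t. t ! j \<in> sorts K (ty R ! j)"
    using assms(1) unfolding ms_wf_def by blast+
  then show "length t' = length (ty R)"
    and "\<And>j. j < length t' \<Longrightarrow> t' ! j \<in> sorts (ms_quotient K e) (ty R ! j)"
    using t(2) by auto
next
  show "length (mstruct.dist (ms_quotient K e)) = length s" using assms(1) unfolding ms_wf_def by simp
  fix j assume "j < length s"
  then show "mstruct.dist (ms_quotient K e) ! j \<in> sorts (ms_quotient K e) (s ! j)"
    using assms(1) unfolding ms_wf_def by auto
qed

lemma restrict_id_canonical_retraction: "restrict id (univ k K) \<in> canonical_retractions k K"
  unfolding canonical_retractions_def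
proof (intro CollectI conjI allI impI ballI)
  fix i v assume "i < k" "v \<in> sorts K i"
  then show "restrict id (univ k K) v \<in> sorts K i" unfolding univ_def by auto
next
  fix v assume v: "v \<in> univ k K"
  have "(LEAST u. u \<in> univ k K \<and> restrict id (univ k K) u = restrict id (univ k K) v) = v"
    by (rule Least_equality) (use v in auto)
  then show "restrict id (univ k K) v =
      (LEAST u. u \<in> univ k K \<and> restrict id (univ k K) u = restrict id (univ k K) v)"
    using v by simp
qed simp

lemma inj_set_ms_quotient_restrict_id:
  assumes "sig_wf k ty s" "ms_wf k ty s K"
  shows "inj_set k (ms_quotient K (restrict id (univ k K))) G = inj_set k K G"
proof -
  let ?e = "restrict id (univ k K)"
  have "sorts (ms_quotient K ?e) i = sorts K i" if "i < k" for i
    using that by (auto simp: univ_def image_iff)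
  moreover have "rels (ms_quotient K ?e) R = rels K R" for R
    using rels_subset_univ[OF assms] by (force simp: map_restrict_eq)
  moreover have "mstruct.dist (ms_quotient K ?e) = mstruct.dist K"
    using dist_subset_univ[OF assms] by (simp add: map_restrict_eq)
  moreover have "univ k (ms_quotient K ?e) = univ k K" by (simp add: univ_ms_quotient)
  ultimately show ?thesis unfolding inj_set_def hom_set_def is_hom_def by simp
qed

lemma card_univ_ms_quotient_less:
  assumes "ms_finite k K" "e \<in> canonical_retractions k K" "e \<noteq> restrict id (univ k K)"
  shows "card (univ k (ms_quotient K e)) < card (univ k K)"
proof -
  have "\<exists>v\<in>univ k K. e v \<noteq> v"
  proof (rule ccontr)
    assume "\<not> (\<exists>v\<in>univ k K. e v \<noteq> v)"
    then have "e = restrict id (univ k K)"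
      using canonical_retraction_extensional[OF assms(2)] by (intro extensionalityI[of _ "univ k K"]) auto
    then show False using assms(3) by simp
  qed
  then obtain v where v: "v \<in> univ k K" "e v \<noteq> v" by blast
  then have "\<not> inj_on e (univ k K)"
    using canonical_retraction_idem[OF assms(2) v(1)] by (metis inj_onD)
  then have "card (e ` univ k K) \<noteq> card (univ k K)"
    using eq_card_imp_inj_on[OF finite_univ[OF assms(1)]] by blast
  then show ?thesis
    using card_image_le[OF finite_univ[OF assms(1)], of e] by (simp add: univ_ms_quotient)
qed

lemma kernel_restrict_comp:
  assumes e: "e \<in> canonical_retractions k K" and g: "g \<in> inj_set k (ms_quotient K e) G"
  shows "kernel_retraction k K (restrict (g \<circ> e) (univ k K)) = e"
proof (rule extensionalityI[of _ "univ k K"])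
  show "kernel_retraction k K (restrict (g \<circ> e) (univ k K)) \<in> extensional (univ k K)"
    unfolding kernel_retraction_def by simp
  show "e \<in> extensional (univ k K)" by (rule canonical_retraction_extensional[OF e])
  fix v assume v: "v \<in> univ k K"
  have "inj_on g (e ` univ k K)" using g unfolding inj_set_def univ_ms_quotient by blast
  then have "g (e u) = g (e v) \<longleftrightarrow> e u = e v" if "u \<in> univ k K" for u
    using that v by (simp add: inj_on_eq_iff)
  then have "(\<lambda>u. u \<in> univ k K \<and> restrict (g \<circ> e) (univ k K) u = restrict (g \<circ> e) (univ k K) v)
      = (\<lambda>u. u \<in> univ k K \<and> e u = e v)"
    using v by auto
  then have "kernel_retraction k K (restrict (g \<circ> e) (univ k K)) v = (LEAST u. u \<in> univ k K \<and> e u = e v)"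
    using v unfolding kernel_retraction_def by simp
  also have "\<dots> = e v" by (rule canonical_retraction_Least[OF e v, symmetric])
  finally show "kernel_retraction k K (restrict (g \<circ> e) (univ k K)) v = e v" .
qed

lemma restrict_restrict_comp_image:
  assumes e: "e \<in> canonical_retractions k K" and g: "g \<in> extensional (e ` univ k K)"
  shows "restrict (restrict (g \<circ> e) (univ k K)) (e ` univ k K) = g"
  using canonical_retraction_idem[OF e] g by (intro extensionalityI[of _ "e ` univ k K"]) auto

lemma hom_factors_through_kernel:
  assumes "sig_wf k ty s" "ms_wf k ty s K" "ms_wf k ty s G" and f: "f \<in> hom_set k K G"
  shows "kernel_retraction k K f \<in> canonical_retractions k K"
    and "restrict f (kernel_retraction k K f ` univ k K)
      \<in> inj_set k (ms_quotient K (kernel_retraction k K f)) G"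
    and "restrict (restrict f (kernel_retraction k K f ` univ k K) \<circ> kernel_retraction k K f)
      (univ k K) = f"
proof -
  let ?U = "univ k K"
  define e where "e = kernel_retraction k K f"
  have fh: "is_hom k K G f" and fext: "f \<in> extensional ?U" using f unfolding hom_set_def by auto
  have L: "e v \<in> ?U \<and> f (e v) = f v" if v: "v \<in> ?U" for v
  proof -
    have "(LEAST u. u \<in> ?U \<and> f u = f v) \<in> ?U \<and> f (LEAST u. u \<in> ?U \<and> f u = f v) = f v"
      by (rule LeastI[of "\<lambda>u. u \<in> ?U \<and> f u = f v" v]) (use v in simp)
    then show ?thesis using v unfolding e_def kernel_retraction_def by simp
  qed
  have e_eq_iff: "e u = e v \<longleftrightarrow> f u = f v" if "u \<in> ?U" "v \<in> ?U" for u v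
  proof
    assume "e u = e v" then show "f u = f v" using L that by metis
  next
    assume "f u = f v" then show "e u = e v" using that unfolding e_def kernel_retraction_def by simp
  qed
  show "kernel_retraction k K f \<in> canonical_retractions k K"
    unfolding canonical_retractions_def e_def[symmetric]
  proof (intro CollectI conjI allI impI ballI)
    show "e \<in> extensional ?U" unfolding e_def kernel_retraction_def by simp
  next
    fix i v assume i: "i < k" and v: "v \<in> sorts K i"
    then have vU: "v \<in> ?U" unfolding univ_def by auto
    then obtain j where j: "j < k" "e v \<in> sorts K j" using L unfolding univ_def by auto
    have "f (e v) \<in> sorts G j" "f v \<in> sorts G i" using fh i j v unfolding is_hom_def by auto
    then have "i = j" using L[OF vU] assms(3) i j unfolding ms_wf_def by auto
    then show "e v \<in> sorts K i" using j by simp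
  next
    fix v assume v: "v \<in> ?U"
    have "(\<lambda>u. u \<in> ?U \<and> e u = e v) = (\<lambda>u. u \<in> ?U \<and> f u = f v)" using e_eq_iff v by auto
    then show "e v = (LEAST u. u \<in> ?U \<and> e u = e v)" using v unfolding e_def kernel_retraction_def by simp
  qed
  define g where "g = restrict f (e ` ?U)"
  have g_e: "g (e v) = f v" if "v \<in> ?U" for v using L that unfolding g_def by auto
  have map_g_e: "map g (map e t) = map f t" if "set t \<subseteq> ?U" for t
    using that g_e by (induct t) auto
  show "restrict f (kernel_retraction k K f ` ?U) \<in> inj_set k (ms_quotient K (kernel_retraction k K f)) G"
    unfolding e_def[symmetric] g_def[symmetric] inj_set_def hom_set_def univ_ms_quotient
  proof (intro CollectI conjI)
    show "g \<in> extensional (e ` ?U)" unfolding g_def by simp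
    show "inj_on g (e ` ?U)"
    proof (rule inj_onI)
      fix x y assume "x \<in> e ` ?U" "y \<in> e ` ?U" "g x = g y"
      then obtain u v where "u \<in> ?U" "v \<in> ?U" "x = e u" "y = e v" "g (e u) = g (e v)" by blast
      then show "x = y" using g_e e_eq_iff by metis
    qed
    show "is_hom k (ms_quotient K e) G g"
      unfolding is_hom_def
    proof (intro conjI allI impI ballI)
      fix i w assume i: "i < k" and "w \<in> sorts (ms_quotient K e) i"
      then obtain v where v: "v \<in> sorts K i" "w = e v" by auto
      then have "v \<in> ?U" using i unfolding univ_def by auto
      then show "g w \<in> sorts G i" using g_e fh i v unfolding is_hom_def by auto
    next
      fix R t' assume "t' \<in> rels (ms_quotient K e) R"
      then obtain t where t: "t \<in> rels K R" "t' = map e t" by auto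
      then have "map g t' = map f t" using map_g_e[OF rels_subset_univ[OF assms(1,2) t(1)]] by simp
      then show "map g t' \<in> rels G R" using t(1) fh unfolding is_hom_def by auto
    next
      show "map g (mstruct.dist (ms_quotient K e)) = mstruct.dist G"
        using map_g_e[OF dist_subset_univ[OF assms(1,2)]] fh unfolding is_hom_def by simp
    qed
  qed
  show "restrict (restrict f (kernel_retraction k K f ` ?U) \<circ> kernel_retraction k K f) ?U = f"
    unfolding e_def[symmetric] g_def[symmetric]
    using g_e fext by (intro extensionalityI[of _ ?U]) auto
qed

lemma bij_betw_Sigma_ms_quotient_inj_set_hom_set:
  assumes "sig_wf k ty s" "ms_wf k ty s K" "ms_wf k ty s G"
  shows "bij_betw (\<lambda>(e, g). restrict (g \<circ> e) (univ k K))
    (SIGMA e:canonical_retractions k K. inj_set k (ms_quotient K e) G) (hom_set k K G)"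
proof (rule bij_betw_imageI)
  show "inj_on (\<lambda>(e, g). restrict (g \<circ> e) (univ k K))
      (SIGMA e:canonical_retractions k K. inj_set k (ms_quotient K e) G)"
  proof (rule inj_onI, clarsimp)
    fix e g e' g'
    assume e: "e \<in> canonical_retractions k K" and g: "g \<in> inj_set k (ms_quotient K e) G"
      and e': "e' \<in> canonical_retractions k K" and g': "g' \<in> inj_set k (ms_quotient K e') G"
      and eq: "restrict (g \<circ> e) (univ k K) = restrict (g' \<circ> e') (univ k K)"
    have "e = e'" using eq kernel_restrict_comp[OF e g] kernel_restrict_comp[OF e' g'] by simp
    moreover have "g \<in> extensional (e ` univ k K)" "g' \<in> extensional (e ` univ k K)"
      using g g' \<open>e = e'\<close> unfolding inj_set_def hom_set_def univ_ms_quotient by auto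
    ultimately show "e = e' \<and> g = g'"
      using eq restrict_restrict_comp_image[OF e] by metis
  qed
  show "(\<lambda>(e, g). restrict (g \<circ> e) (univ k K)) `
      (SIGMA e:canonical_retractions k K. inj_set k (ms_quotient K e) G) = hom_set k K G"
  proof (intro equalityI subsetI)
    fix f assume "f \<in> (\<lambda>(e, g). restrict (g \<circ> e) (univ k K)) `
      (SIGMA e:canonical_retractions k K. inj_set k (ms_quotient K e) G)"
    then show "f \<in> hom_set k K G"
      using is_hom_restrict_comp[OF assms(1,2) is_hom_ms_quotient_map]
      unfolding inj_set_def hom_set_def by auto
  next
    fix f assume "f \<in> hom_set k K G"
    note factors = hom_factors_through_kernel[OF assms this]
    show "f \<in> (\<lambda>(e, g). restrict (g \<circ> e) (univ k K)) `
      (SIGMA e:canonical_retractions k K. inj_set k (ms_quotient K e) G)"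
      by (rule image_eqI[where x = "(kernel_retraction k K f,
          restrict f (kernel_retraction k K f ` univ k K))"]) (use factors in auto)
  qed
qed

lemma card_hom_set_eq_sum_ms_quotients:
  assumes "sig_wf k ty s" "ms_wf k ty s K" "ms_finite k K" "ms_wf k ty s G" "ms_finite k G"
  shows "card (hom_set k K G) =
    (\<Sum>e\<in>canonical_retractions k K. card (inj_set k (ms_quotient K e) G))"
  using bij_betw_same_card[OF bij_betw_Sigma_ms_quotient_inj_set_hom_set[OF assms(1,2,4)]]
    finite_canonical_retractions[OF assms(3)]
    finite_inj_set[OF ms_finite_ms_quotient[OF assms(3)] assms(5)]
  by simp

lemma card_inj_set_cong_if_hom_count_cong:
  fixes G :: "('a, 'r) mstruct" and H :: "('b, 'r) mstruct" and K :: "(nat, 'r) mstruct"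
  assumes "sig_wf k ty s" "ms_wf k ty s G" "ms_finite k G" "ms_wf k ty s H" "ms_finite k H"
    and hom_cong: "\<And>K :: (nat, 'r) mstruct. ms_wf k ty s K \<Longrightarrow> ms_finite k K \<Longrightarrow>
        [hom_count k K G = hom_count k K H] (mod p)"
  shows "ms_wf k ty s K \<Longrightarrow> ms_finite k K \<Longrightarrow>
    [card (inj_set k K G) = card (inj_set k K H)] (mod p)"
proof (induction "card (univ k K)" arbitrary: K rule: less_induct)
  case less
  let ?R = "canonical_retractions k K - {restrict id (univ k K)}"
  have split: "hom_count k K X =
      card (inj_set k K X) + (\<Sum>e\<in>?R. card (inj_set k (ms_quotient K e) X))"
    if "ms_wf k ty s X" "ms_finite k X" for X :: "('c, 'r) mstruct"
    using card_hom_set_eq_sum_ms_quotients[OF assms(1) less.prems that]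
      sum.remove[OF finite_canonical_retractions[OF less.prems(2)] restrict_id_canonical_retraction,
        of "\<lambda>e. card (inj_set k (ms_quotient K e) X)"]
      inj_set_ms_quotient_restrict_id[OF assms(1) less.prems(1), of X]
    by (simp add: hom_count_eq_card_hom_set)
  have "[(\<Sum>e\<in>?R. card (inj_set k (ms_quotient K e) H)) =
      (\<Sum>e\<in>?R. card (inj_set k (ms_quotient K e) G))] (mod p)"
  proof (rule cong_sum)
    fix e assume "e \<in> ?R"
    then have e: "e \<in> canonical_retractions k K" "e \<noteq> restrict id (univ k K)" by auto
    show "[card (inj_set k (ms_quotient K e) H) = card (inj_set k (ms_quotient K e) G)] (mod p)"
      using less.hyps[OF card_univ_ms_quotient_less[OF less.prems(2) e]
          ms_wf_ms_quotient[OF less.prems(1) e(1)] ms_finite_ms_quotient[OF less.prems(2)]]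
      by (rule cong_sym)
  qed
  then have "[card (inj_set k K H) + (\<Sum>e\<in>?R. card (inj_set k (ms_quotient K e) H)) =
      card (inj_set k K H) + (\<Sum>e\<in>?R. card (inj_set k (ms_quotient K e) G))] (mod p)"
    by (rule cong_add[OF cong_refl])
  with hom_cong[OF less.prems]
  have "[card (inj_set k K G) + (\<Sum>e\<in>?R. card (inj_set k (ms_quotient K e) G)) =
      card (inj_set k K H) + (\<Sum>e\<in>?R. card (inj_set k (ms_quotient K e) G))] (mod p)"
    unfolding split[OF assms(2,3)] split[OF assms(4,5)] by (rule cong_trans)
  then show ?case by (simp only: cong_add_rcancel_nat)
qed

section \<open>Automorphisms of p-rigid structures\<close>

text \<open>Cauchy's theorem, obtained from Sylow's.\<close>

lemma (in group) ex_nontrivial_pow_prime_eq_one: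
  assumes "finite (carrier G)" "prime p" "p dvd order G"
  shows "\<exists>x\<in>carrier G. x \<noteq> \<one> \<and> x [^] p = \<one>"
proof -
  obtain m where m: "order G = p ^ 1 * m" using assms(3) by (auto elim: dvdE)
  obtain P where P: "subgroup P G" "card P = p"
    using sylow_thm[OF assms(2) is_group m assms(1)] by auto
  then have "\<not> P \<subseteq> {\<one>}" using prime_gt_1_nat[OF assms(2)] card_mono[of "{\<one>}" P] by auto
  then obtain x where x: "x \<in> P" "x \<noteq> \<one>" by blast
  interpret P: group "G\<lparr>carrier := P\<rparr>" by (rule subgroup_imp_group[OF P(1)])
  have "x [^]\<^bsub>G\<lparr>carrier := P\<rparr>\<^esub> order (G\<lparr>carrier := P\<rparr>) = \<one>"
    using P.pow_order_eq_1 x(1) by simp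
  then have "x [^] p = \<one>" using P(2) by (simp add: order_def flip: nat_pow_consistent)
  then show ?thesis using x subgroup.subset[OF P(1)] by blast
qed

lemma BijGroup_mult: "a \<in> Bij S \<Longrightarrow> b \<in> Bij S \<Longrightarrow> a \<otimes>\<^bsub>BijGroup S\<^esub> b = compose S a b"
  by (simp add: BijGroup_def)

lemma carrier_BijGroup: "carrier (BijGroup S) = Bij S"
  by (simp add: BijGroup_def)

lemma one_BijGroup: "\<one>\<^bsub>BijGroup S\<^esub> = (\<lambda>v\<in>S. v)"
  by (simp add: BijGroup_def)

lemma BijGroup_nat_pow:
  assumes "x \<in> Bij S"
  shows "x [^]\<^bsub>BijGroup S\<^esub> n = (\<lambda>v\<in>S. (x ^^ n) v)"
proof (induction n)
  case 0
  show ?case by (simp add: one_BijGroup)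
next
  case (Suc n)
  have "x [^]\<^bsub>BijGroup S\<^esub> n \<in> Bij S"
    using monoid.nat_pow_closed[OF group.is_monoid[OF group_BijGroup]] assms
    unfolding carrier_BijGroup by blast
  then have "x [^]\<^bsub>BijGroup S\<^esub> Suc n = compose S (x [^]\<^bsub>BijGroup S\<^esub> n) x"
    unfolding nat_pow_Suc using assms by (rule BijGroup_mult)
  also have "\<dots> = (\<lambda>v\<in>S. (x ^^ Suc n) v)"
    unfolding Suc compose_def
  proof (rule restrict_ext)
    fix v assume "v \<in> S"
    then have "x v \<in> S" using assms Bij_imp_funcset by blast
    then show "restrict (x ^^ n) S (x v) = (x ^^ Suc n) v" by (simp add: funpow_swap1)
  qed
  finally show ?case .
qed

lemma subgroup_automorphisms:
  assumes "sig_wf k ty s" "ms_wf k ty s G" "ms_finite k G"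
  shows "subgroup (inj_set k G G) (BijGroup (univ k G))"
proof -
  let ?U = "univ k G"
  have iso: "Defs.is_iso k G G f" if "f \<in> inj_set k G G" for f
    using that is_iso_if_inj_homs_both_ways[OF assms(1,2,2,3,3)] unfolding inj_set_def hom_set_def by blast
  have Bij: "inj_set k G G \<subseteq> Bij ?U"
  proof
    fix f assume f: "f \<in> inj_set k G G"
    then have "inj_on f ?U" "f ` ?U = ?U" "f \<in> extensional ?U"
      using is_iso_image_univ[OF iso[OF f]] unfolding inj_set_def hom_set_def by auto
    then show "f \<in> Bij ?U" unfolding Bij_def bij_betw_def by auto
  qed
  show ?thesis
  proof (rule group.subgroupI[OF group_BijGroup])
    show "inj_set k G G \<subseteq> carrier (BijGroup ?U)" using Bij by (simp add: carrier_BijGroup)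
    show "inj_set k G G \<noteq> {}"
      using is_hom_restrict_id[OF assms(1,2)] unfolding inj_set_def hom_set_def by auto
  next
    fix f assume f: "f \<in> inj_set k G G"
    have inv_iso: "Defs.is_iso k G G (\<lambda>w\<in>?U. inv_into ?U f w)"
      by (rule is_iso_inv[OF assms(1,2,2) iso[OF f]])
    have "(\<lambda>w\<in>?U. inv_into ?U f w) \<in> inj_set k G G"
      using is_iso_imp_is_hom[OF assms(1,2) inv_iso] is_iso_inj_on_univ[OF assms(2) inv_iso]
      unfolding inj_set_def hom_set_def by auto
    moreover have "inv\<^bsub>BijGroup ?U\<^esub> f = (\<lambda>w\<in>?U. inv_into ?U f w)"
      using Bij f by (simp add: inv_BijGroup subset_iff)
    ultimately show "inv\<^bsub>BijGroup ?U\<^esub> f \<in> inj_set k G G" by simp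
  next
    fix f g assume f: "f \<in> inj_set k G G" and g: "g \<in> inj_set k G G"
    then have "f \<otimes>\<^bsub>BijGroup ?U\<^esub> g = restrict (f \<circ> g) ?U"
      using Bij BijGroup_mult[of f ?U g] by (auto simp: compose_def comp_def)
    moreover have "is_hom k G G (restrict (f \<circ> g) ?U)"
      using f g is_hom_restrict_comp[OF assms(1,2)] unfolding inj_set_def hom_set_def by blast
    moreover have "inj_on (f \<circ> g) ?U"
    proof (rule comp_inj_on)
      show "inj_on g ?U" using g unfolding inj_set_def by blast
      have "g ` ?U \<subseteq> ?U" using g is_hom_univ unfolding inj_set_def hom_set_def by auto
      then show "inj_on f (g ` ?U)" using f inj_on_subset unfolding inj_set_def by blast
    qed
    ultimately show "f \<otimes>\<^bsub>BijGroup ?U\<^esub> g \<in> inj_set k G G"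
      unfolding inj_set_def hom_set_def by simp
  qed
qed

lemma p_rigid_imp_not_dvd_card_automorphisms:
  fixes G :: "('a, 'r) mstruct"
  assumes "prime p" "sig_wf k ty s" "ms_wf k ty s G" "ms_finite k G" "p_rigid p k G"
  shows "\<not> p dvd card (inj_set k G G)"
proof
  assume dvd: "p dvd card (inj_set k G G)"
  let ?U = "univ k G"
  let ?Aut = "BijGroup ?U\<lparr>carrier := inj_set k G G\<rparr>"
  have sub: "subgroup (inj_set k G G) (BijGroup ?U)" by (rule subgroup_automorphisms[OF assms(2-4)])
  interpret Aut: group ?Aut by (rule subgroup.subgroup_is_group[OF sub group_BijGroup])
  obtain \<pi> where \<pi>: "\<pi> \<in> inj_set k G G" "\<pi> \<noteq> (\<lambda>v\<in>?U. v)" "\<pi> [^]\<^bsub>?Aut\<^esub> p = \<one>\<^bsub>?Aut\<^esub>"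
    using Aut.ex_nontrivial_pow_prime_eq_one[OF _ assms(1)] dvd finite_inj_set[OF assms(4,4)]
    by (auto simp: order_def one_BijGroup)
  have \<pi>_Bij: "\<pi> \<in> Bij ?U" using subgroup.subset[OF sub] \<pi>(1) by (auto simp: carrier_BijGroup)
  have "\<pi> [^]\<^bsub>BijGroup ?U\<^esub> p = \<one>\<^bsub>BijGroup ?U\<^esub>"
    using \<pi>(3) by (simp add: monoid.nat_pow_consistent[OF group.is_monoid[OF group_BijGroup], symmetric])
  then have "(\<lambda>v\<in>?U. (\<pi> ^^ p) v) = (\<lambda>v\<in>?U. v)"
    unfolding BijGroup_nat_pow[OF \<pi>_Bij] one_BijGroup .
  then have "\<forall>i<k. \<forall>v\<in>sorts G i. (\<pi> ^^ p) v = v"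
    unfolding univ_def by (metis UN_I lessThan_iff restrict_apply')
  moreover have "\<exists>v\<in>?U. \<pi> v \<noteq> v"
  proof (rule ccontr)
    assume "\<not> (\<exists>v\<in>?U. \<pi> v \<noteq> v)"
    then have "\<pi> = (\<lambda>v\<in>?U. v)"
      using \<pi>(1) unfolding inj_set_def hom_set_def by (intro extensionalityI[of _ ?U]) auto
    then show False using \<pi>(2) by simp
  qed
  then have "\<exists>i<k. \<exists>v\<in>sorts G i. \<pi> v \<noteq> v" unfolding univ_def by auto
  moreover have "Defs.is_iso k G G \<pi>"
    using \<pi>(1) is_iso_if_inj_homs_both_ways[OF assms(2,3,3,4,4)] unfolding inj_set_def hom_set_def by blast
  ultimately show False using assms(5) unfolding p_rigid_def by blast
qed

lemma ex_inj_hom_if_inj_count_cong: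
  fixes G :: "('a, 'r) mstruct" and H :: "('b, 'r) mstruct"
  assumes "prime p" "sig_wf k ty s" "ms_wf k ty s G" "ms_finite k G" "p_rigid p k G"
    "ms_wf k ty s H" "ms_finite k H"
    and inj_cong: "\<And>K :: (nat, 'r) mstruct. ms_wf k ty s K \<Longrightarrow> ms_finite k K \<Longrightarrow>
        [card (inj_set k K G) = card (inj_set k K H)] (mod p)"
  shows "\<exists>f. is_hom k G H f \<and> inj_on f (univ k G)"
proof -
  obtain G' :: "(nat, 'r) mstruct" and \<phi> where G': "ms_wf k ty s G'" "ms_finite k G'" "Defs.is_iso k G' G \<phi>"
    using ex_is_iso_nat_copy[OF assms(2-4)] by blast
  have "card (inj_set k G' G) = card (inj_set k G G)" "card (inj_set k G' H) = card (inj_set k G H)"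
    using card_inj_set_eq_if_is_iso[OF assms(2) G'(1) assms(3) G'(2) assms(4) _ G'(3)] assms(4,7)
    by blast+
  then have "[card (inj_set k G G) = card (inj_set k G H)] (mod p)"
    using inj_cong[OF G'(1,2)] by simp
  then have "\<not> p dvd card (inj_set k G H)"
    using p_rigid_imp_not_dvd_card_automorphisms[OF assms(1-5)] by (simp add: cong_dvd_iff)
  then have "inj_set k G H \<noteq> {}" by (metis card.empty dvd_0_right)
  then show ?thesis unfolding inj_set_def hom_set_def by blast
qed

theorem lemmaA3:
  fixes p k :: nat and ty :: "'r \<Rightarrow> nat list" and s :: "nat list"
    and G :: "('a, 'r) mstruct" and H :: "('b, 'r) mstruct"
  assumes "prime p"
    and "sig_wf k ty s"
    and "ms_wf k ty s G" and "ms_finite k G" and "p_rigid p k G"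
    and "ms_wf k ty s H" and "ms_finite k H" and "p_rigid p k H"
  shows "ms_iso k G H \<longleftrightarrow>
    (\<forall>K :: (nat, 'r) mstruct. ms_wf k ty s K \<and> ms_finite k K \<longrightarrow>
        hom_count k K G mod p = hom_count k K H mod p)"
proof
  assume "ms_iso k G H"
  then show "\<forall>K :: (nat, 'r) mstruct. ms_wf k ty s K \<and> ms_finite k K \<longrightarrow>
      hom_count k K G mod p = hom_count k K H mod p"
    using hom_count_eq_if_is_iso[OF assms(2) _ _ assms(3,6,4,7)] unfolding ms_iso_def by metis
next
  assume "\<forall>K :: (nat, 'r) mstruct. ms_wf k ty s K \<and> ms_finite k K \<longrightarrow>
      hom_count k K G mod p = hom_count k K H mod p"
  then have hom_cong: "[hom_count k K G = hom_count k K H] (mod p)"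
    if "ms_wf k ty s K" "ms_finite k K" for K :: "(nat, 'r) mstruct"
    using that unfolding cong_def by blast
  obtain f where f: "is_hom k G H f" "inj_on f (univ k G)"
    using ex_inj_hom_if_inj_count_cong[OF assms(1-7)]
      card_inj_set_cong_if_hom_count_cong[OF assms(2,3,4,6,7) hom_cong] by blast
  obtain g where g: "is_hom k H G g" "inj_on g (univ k H)"
    using ex_inj_hom_if_inj_count_cong[OF assms(1,2,6-8,3,4)]
      card_inj_set_cong_if_hom_count_cong[OF assms(2,6,7,3,4) hom_cong[THEN cong_sym]] by blast
  show "ms_iso k G H"
    using is_iso_if_inj_homs_both_ways[OF assms(2,3,6,4,7) f g] unfolding ms_iso_def by blast
qed

end
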